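(* Let $\mathcal L(\lambda)=L_0+\lambda L_1+\cdots+\lambda^pL_p$ be a selfadjoint matrix pencil of odd degree $p=2\ell+1$ acting on $X=\mathbb{C}^N$, and suppose that $L_p$ is invertible. Then \[ N-2N_-(L_0)-Z^\downarrow_+(\mathcal L)-Z^\downarrow_-(\mathcal L)+\sum_{\lambda\in\sigma(\mathcal L),\,\lambda>0}\kappa(\lambda)-\sum_{\lambda\in\sigma(\mathcal L),\,\lambda<0}\kappa(\lambda)=0, \] and moreover \[ N_\pm(\mathcal L)\ \ge\ \bigl|N_-(L_0)+Z^\downarrow_\pm(\mathcal L)-N_\mp(L_p)\bigr|. \]
   Context: The pencil is selfadjoint: every $L_j$ is an $N\times N$ Hermitian matrix. Its characteristic values are the $\lambda\in\mathbb{C}$ with $\det\mathcal L(\lambda)=0$, and $\sigma(\mathcal L)$ is the set of them. For real $\lambda$, the $N$ eigenvalues of the Hermitian matrix $\mathcal L(\lambda)$ can be chosen as $N$ real analytic functions $\mu=\mu(\lambda)$ of $\lambda\in\mathbb{R}$ (eigenvalue branches, counted with multiplicity). For a Hermitian matrix $A$, $N_+(A)$ (resp. $N_-(A)$) is the number of strictly positive (resp. negative) eigenvalues counted with multiplicity. For the pencil, $N_+(\mathcal L)$ (resp. $N_-(\mathcal L)$) is the number of strictly positive (resp. negative) real characteristic values counted with geometric multiplicity $\dim\ker\mathcal L(\lambda)$. $Z^\downarrow_+(\mathcal L)$ (resp. $Z^\downarrow_-(\mathcal L)$) is the number of eigenvalue branches with $\mu(0)=0$ and $\mu(\lambda)<0$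 for all sufficiently small $\lambda>0$ (resp. $\lambda<0$). Krein signature (graphical): if $\lambda_0\in\mathbb{R}$ is a characteristic value and $\mu$ is a branch with $\mu^{(n)}(\lambda_0)=0$ for $n<m$ and $\mu^{(m)}(\lambda_0)\ne0$, set $\eta=\operatorname{sign}\mu^{(m)}(\lambda_0)$ and $\kappa^\pm(\mu,\lambda_0)=m/2$ if $m$ is even, $\kappa^\pm(\mu,\lambda_0)=(m\pm\eta)/2$ if $m$ is odd. Then $\kappa^\pm(\lambda_0)$ is the sum of $\kappa^\pm(\mu,\lambda_0)$ over all branches vanishing at $\lambda_0$, and $\kappa(\lambda_0)=\kappa^+(\lambda_0)-\kappa^-(\lambda_0)$. The sums in the identity run over real characteristic values only. *)

theory Defs
  imports "HOL-Analysis.Analysis" "Jordan_Normal_Form.Jordan_Normal_Form" "Jordan_Normal_Form.Matrix_Kernel"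
begin

definition hermitian_mat :: "nat \<Rightarrow> complex mat \<Rightarrow> bool" where
  "hermitian_mat N A \<longleftrightarrow> A \<in> carrier_mat N N \<and>
     (\<forall>i<N. \<forall>j<N. A $$ (i,j) = cnj (A $$ (j,i)))"

definition pencil :: "nat \<Rightarrow> nat \<Rightarrow> (nat \<Rightarrow> complex mat) \<Rightarrow> complex \<Rightarrow> complex mat" where
  "pencil N p L z = mat N N (\<lambda>(r,c). \<Sum>j\<le>p. z ^ j * L j $$ (r,c))"

definition Npos_mat :: "complex mat \<Rightarrow> nat" where
  "Npos_mat A = (\<Sum>x\<in>{x::real. 0 < x \<and> poly (char_poly A) (complex_of_real x) = 0}.
                   Polynomial.order (complex_of_real x) (char_poly A))"

definition Nneg_mat :: "complex mat \<Rightarrow> nat" where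
  "Nneg_mat A = (\<Sum>x\<in>{x::real. x < 0 \<and> poly (char_poly A) (complex_of_real x) = 0}.
                   Polynomial.order (complex_of_real x) (char_poly A))"

definition real_char_values :: "nat \<Rightarrow> nat \<Rightarrow> (nat \<Rightarrow> complex mat) \<Rightarrow> real set" where
  "real_char_values N p L = {x::real. det (pencil N p L (complex_of_real x)) = 0}"

definition Npos_pencil :: "nat \<Rightarrow> nat \<Rightarrow> (nat \<Rightarrow> complex mat) \<Rightarrow> nat" where
  "Npos_pencil N p L = (\<Sum>x\<in>{x\<in>real_char_values N p L. 0 < x}.
                          kernel_dim (pencil N p L (complex_of_real x)))"

definition Nneg_pencil :: "nat \<Rightarrow> nat \<Rightarrow> (nat \<Rightarrow> complex mat) \<Rightarrow> nat" where
  "Nneg_pencil N p L = (\<Sum>x\<in>{x\<in>real_char_values N p L. x < 0}.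
                          kernel_dim (pencil N p L (complex_of_real x)))"

definition real_analytic :: "(real \<Rightarrow> real) \<Rightarrow> bool" where
  "real_analytic f \<longleftrightarrow> (\<forall>x. \<exists>r>0. \<exists>a::nat \<Rightarrow> real.
       \<forall>y. \<bar>y - x\<bar> < r \<longrightarrow> (\<lambda>n. a n * (y - x) ^ n) sums f y)"

text \<open>mu :: nat => real => real, indexed by i < N, is a family of eigenvalue branches
  of the pencil: N real analytic functions whose values at each real lambda are exactly the
  eigenvalues of the Hermitian matrix L(lambda), counted with multiplicity.\<close>
definition eigen_branches :: "nat \<Rightarrow> nat \<Rightarrow> (nat \<Rightarrow> complex mat) \<Rightarrow> (nat \<Rightarrow> real \<Rightarrow> real) \<Rightarrow> bool" where
  "eigen_branches N p L mu \<longleftrightarrow>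
     (\<forall>i<N. real_analytic (mu i)) \<and>
     (\<forall>x t. count (mset (map (\<lambda>i. mu i x) [0..<N])) t =
              Polynomial.order (complex_of_real t) (char_poly (pencil N p L (complex_of_real x))))"

definition Zdown_pos :: "nat \<Rightarrow> (nat \<Rightarrow> real \<Rightarrow> real) \<Rightarrow> nat" where
  "Zdown_pos N mu = card {i. i < N \<and> mu i 0 = 0 \<and> (\<forall>\<^sub>F x in at_right 0. mu i x < 0)}"

definition Zdown_neg :: "nat \<Rightarrow> (nat \<Rightarrow> real \<Rightarrow> real) \<Rightarrow> nat" where
  "Zdown_neg N mu = card {i. i < N \<and> mu i 0 = 0 \<and> (\<forall>\<^sub>F x in at_left 0. mu i x < 0)}"

definition vanish_order :: "(real \<Rightarrow> real) \<Rightarrow> real \<Rightarrow> nat" where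
  "vanish_order f x0 = (LEAST m. (deriv ^^ m) f x0 \<noteq> 0)"

definition vanish_sign :: "(real \<Rightarrow> real) \<Rightarrow> real \<Rightarrow> int" where
  "vanish_sign f x0 = (if 0 < (deriv ^^ vanish_order f x0) f x0 then 1 else -1)"

definition kappa_plus_branch :: "(real \<Rightarrow> real) \<Rightarrow> real \<Rightarrow> int" where
  "kappa_plus_branch f x0 = (let m = int (vanish_order f x0) in
     if even m then m div 2 else (m + vanish_sign f x0) div 2)"

definition kappa_minus_branch :: "(real \<Rightarrow> real) \<Rightarrow> real \<Rightarrow> int" where
  "kappa_minus_branch f x0 = (let m = int (vanish_order f x0) in
     if even m then m div 2 else (m - vanish_sign f x0) div 2)"

definition kappa_plus :: "nat \<Rightarrow> (nat \<Rightarrow> real \<Rightarrow> real) \<Rightarrow> real \<Rightarrow> int" where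
  "kappa_plus N mu x0 = (\<Sum>i\<in>{i. i < N \<and> mu i x0 = 0}. kappa_plus_branch (mu i) x0)"

definition kappa_minus :: "nat \<Rightarrow> (nat \<Rightarrow> real \<Rightarrow> real) \<Rightarrow> real \<Rightarrow> int" where
  "kappa_minus N mu x0 = (\<Sum>i\<in>{i. i < N \<and> mu i x0 = 0}. kappa_minus_branch (mu i) x0)"

definition kappa :: "nat \<Rightarrow> (nat \<Rightarrow> real \<Rightarrow> real) \<Rightarrow> real \<Rightarrow> int" where
  "kappa N mu x0 = kappa_plus N mu x0 - kappa_minus N mu x0"

end

(*
  Each eigenvalue branch mu_i of L(lambda) is real analytic, so at a zero of order m it changes sign
  iff m is odd, and kappa^+ - kappa^- of the branch is exactly the jump of the indicator [mu_i > 0]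
  across the zero. Summed over the real characteristic values in (0, b), these jumps telescope to
  [mu_i(b) > 0] - [mu_i > 0 just right of 0].  Since lambda^(-p) L(lambda) -> L_p and L_p is invertible,
  for large |b| the branches have the signs of b^p times the eigenvalues of L_p; p being odd, N_+(L_p)
  of them are positive at +infinity and N_-(L_p) at -infinity.  Just right (left) of 0 the positive
  branches are those that are not negative there: N - N_-(L_0) - Z_+ (resp. Z_-) of them.  Adding the
  two resulting formulas gives the identity.  The inequalities hold because |kappa(lambda)| is at most
  the number of branches vanishing at lambda, which for the Hermitian matrix L(lambda) is
  dim ker L(lambda).
*)

theory Submission
  imports Defs "Jordan_Normal_Form.Jordan_Normal_Form_Existence" "Jordan_Normal_Form.Jordan_Normal_Form_Uniqueness"
begin

section \<open>Hermitian matrices\<close>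

lemma hermitian_mat_carrier: "hermitian_mat n A \<Longrightarrow> A \<in> carrier_mat n n"
  unfolding hermitian_mat_def by blast

lemma hermitian_inner_adjoint:
  fixes A :: "complex mat"
  assumes A: "hermitian_mat n A" and v: "v \<in> carrier_vec n" and w: "w \<in> carrier_vec n"
  shows "(A *\<^sub>v v) \<bullet>c w = v \<bullet>c (A *\<^sub>v w)"
proof -
  have Ac: "A \<in> carrier_mat n n" using A by (rule hermitian_mat_carrier)
  have h: "\<And>i j. i < n \<Longrightarrow> j < n \<Longrightarrow> cnj (A $$ (j,i)) = A $$ (i,j)"
    using A unfolding hermitian_mat_def by (metis complex_cnj_cnj)
  have "(A *\<^sub>v v) \<bullet>c w = (\<Sum>i<n. (\<Sum>j<n. A $$ (i,j) * v $ j) * cnj (w $ i))"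
    using Ac v w by (simp add: scalar_prod_def mult_mat_vec_def row_def atLeast0LessThan)
  also have "\<dots> = (\<Sum>j<n. \<Sum>i<n. v $ j * cnj (A $$ (j,i) * w $ i))"
    unfolding sum_distrib_right
  proof (subst sum.swap, intro sum.cong refl)
    fix j i assume "j \<in> {..<n}" "i \<in> {..<n}"
    then show "A $$ (i,j) * v $ j * cnj (w $ i) = v $ j * cnj (A $$ (j,i) * w $ i)"
      by (simp add: h)
  qed
  also have "\<dots> = v \<bullet>c (A *\<^sub>v w)"
    using Ac v w by (simp add: scalar_prod_def mult_mat_vec_def row_def atLeast0LessThan sum_distrib_left)
  finally show ?thesis .
qed

lemma mat_kernel_square_hermitian:
  fixes A :: "complex mat"
  assumes A: "hermitian_mat n A"
  shows "mat_kernel (A * A) = mat_kernel A"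
proof
  have Ac: "A \<in> carrier_mat n n" using A by (rule hermitian_mat_carrier)
  show "mat_kernel A \<subseteq> mat_kernel (A * A)" by (rule mat_kernel_mult_subset[OF Ac Ac])
  show "mat_kernel (A * A) \<subseteq> mat_kernel A"
  proof
    fix v assume "v \<in> mat_kernel (A * A)"
    then have v: "v \<in> carrier_vec n" and z: "(A * A) *\<^sub>v v = 0\<^sub>v n"
      using Ac by (auto simp: mat_kernel_def)
    define w where "w = A *\<^sub>v v"
    have w: "w \<in> carrier_vec n" using Ac v w_def by auto
    have "A *\<^sub>v w = 0\<^sub>v n" using z Ac v unfolding w_def by (simp add: assoc_mult_mat_vec)
    then have "w \<bullet>c w = 0" using hermitian_inner_adjoint[OF A v w] v by (simp add: w_def)
    then have "w = 0\<^sub>v n" using w by simp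
    then show "v \<in> mat_kernel A" using v Ac w_def by (auto simp: mat_kernel_def)
  qed
qed

lemma sum_list_min_eq_imp_le_one:
  fixes xs :: "nat list"
  assumes "sum_list (map (min 2) xs) = sum_list (map (min 1) xs)"
  shows "\<forall>x\<in>set xs. x \<le> 1"
  using assms
proof (induction xs)
  case (Cons a xs)
  have "sum_list (map (min 1) xs) \<le> sum_list (map (min 2) xs)"
    by (rule sum_list_mono) auto
  with Cons.prems have a: "a \<le> 1" by simp
  with Cons show ?case by simp
qed simp

text \<open>The kernels of A and A^2 agree, so every Jordan block of A for the eigenvalue 0 has size one.\<close>
lemma order_zero_char_poly_eq_kernel_dim:
  fixes A :: "complex mat"
  assumes A: "hermitian_mat n A"
  shows "Polynomial.order 0 (char_poly A) = kernel_dim A"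
proof -
  have Ac: "A \<in> carrier_mat n n" using A by (rule hermitian_mat_carrier)
  obtain as where "char_poly A = (\<Prod>a\<leftarrow>as. [:- a, 1:])"
    using char_poly_factorized[OF Ac] by blast
  from jordan_nf_exists[OF Ac this] obtain n_as where jnf: "jordan_nf A n_as" by blast
  let ?l = "map fst [(n, e)\<leftarrow>n_as . e = 0]"
  have cm: "char_matrix A 0 = A" using Ac unfolding char_matrix_def by auto
  have d1: "dim_gen_eigenspace A 0 1 = kernel_dim A"
    unfolding dim_gen_eigenspace_def cm using Ac by simp
  have "dim_gen_eigenspace A 0 2 = kernel_dim (A * A)"
    unfolding dim_gen_eigenspace_def cm using Ac by (simp add: numeral_2_eq_2)
  also have "\<dots> = kernel_dim A"
    unfolding kernel_dim_def mat_kernel_square_hermitian[OF A] using Ac by simp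
  finally have "sum_list (map (min 2) ?l) = sum_list (map (min 1) ?l)"
    using dim_gen_eigenspace[OF jnf, of 0] d1 by simp
  then have "\<forall>x\<in>set ?l. x \<le> 1" by (rule sum_list_min_eq_imp_le_one)
  then have "sum_list ?l = sum_list (map (min 1) ?l)" by (induct n_as) (auto split: if_splits)
  also have "\<dots> = kernel_dim A" using dim_gen_eigenspace[OF jnf, of 0 1] d1 by simp
  finally show ?thesis unfolding jordan_nf_order[OF jnf] by (simp add: filter_map o_def case_prod_unfold)
qed

section \<open>Listings of real eigenvalues\<close>

definition real_eigenvalue_listing :: "nat \<Rightarrow> complex mat \<Rightarrow> (nat \<Rightarrow> real) \<Rightarrow> bool" where
  "real_eigenvalue_listing N A g \<longleftrightarrow>
     (\<forall>t. count (mset (map g [0..<N])) t = Polynomial.order (complex_of_real t) (char_poly A))"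

lemma count_mset_map_upt: "count (mset (map g [0..<n])) t = card {i. i < n \<and> g i = t}"
proof (induction n)
  case (Suc n)
  have "{i. i < Suc n \<and> g i = t} =
        (if g n = t then insert n {i. i < n \<and> g i = t} else {i. i < n \<and> g i = t})"
    by (auto simp: less_Suc_eq)
  with Suc show ?case by simp
qed simp

lemma order_prod_linear_factors:
  fixes c :: "nat \<Rightarrow> 'a::idom"
  shows "Polynomial.order a (\<Prod>i<n. [:-c i, 1:]) = card {i. i < n \<and> c i = a}"
proof (induction n)
  case 0
  show ?case using order_root[of "1::'a poly" a] by simp
next
  case (Suc n)
  let ?P = "\<Prod>i<n. [:-c i, 1:]"
  have "?P \<noteq> 0" by (subst prod_zero_iff) auto
  then have "?P * [:-c n, 1:] \<noteq> 0" by (rule no_zero_divisors) simp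
  then have "Polynomial.order a (\<Prod>i<Suc n. [:-c i, 1:]) =
      Polynomial.order a ?P + Polynomial.order a [:-c n, 1:]"
    unfolding prod.lessThan_Suc by (rule order_mult)
  then show ?case
    using Suc count_mset_map_upt[of c n a] count_mset_map_upt[of c "Suc n" a]
    by (simp add: order_linear' split: if_split_asm)
qed

lemma order_prod_list_linear_factors:
  fixes bs :: "'a::idom list"
  shows "Polynomial.order a (\<Prod>b\<leftarrow>bs. [:-b, 1:]) = count (mset bs) a"
proof (induction bs)
  case Nil
  show ?case using order_root[of "1::'a poly" a] by simp
next
  case (Cons b bs)
  let ?P = "\<Prod>b\<leftarrow>bs. [:-b, 1:]"
  have "?P \<noteq> 0" by (subst prod_list_zero_iff) auto
  then have "[:-b, 1:] * ?P \<noteq> 0" by (rule no_zero_divisors[rotated]) simp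
  then have "Polynomial.order a (\<Prod>b\<leftarrow>b # bs. [:-b, 1:]) =
      Polynomial.order a [:-b, 1:] + Polynomial.order a ?P"
    unfolding list.map prod_list.Cons by (rule order_mult)
  with Cons show ?case by (simp add: order_linear')
qed

lemma real_eigenvalue_listing_iff_char_poly:
  assumes A: "A \<in> carrier_mat N N"
  shows "real_eigenvalue_listing N A g \<longleftrightarrow> char_poly A = (\<Prod>i<N. [:-complex_of_real (g i), 1:])"
proof
  assume "char_poly A = (\<Prod>i<N. [:-complex_of_real (g i), 1:])"
  then show "real_eigenvalue_listing N A g"
    unfolding real_eigenvalue_listing_def count_mset_map_upt by (simp add: order_prod_linear_factors)
next
  assume g: "real_eigenvalue_listing N A g"
  obtain as where cp: "char_poly A = (\<Prod>a\<leftarrow>as. [:-a, 1:])" and len: "length as = N"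
    using char_poly_factorized[OF A] by blast
  define G where "G = mset (map (complex_of_real \<circ> g) [0..<N])"
  have "count G z \<le> count (mset as) z" for z
  proof (cases "z \<in> \<real>")
    case True
    then obtain t where z: "z = complex_of_real t" by (auto elim: Reals_cases)
    have "count G z = Polynomial.order z (char_poly A)"
      using g unfolding G_def real_eigenvalue_listing_def z count_mset_map_upt by simp
    then show ?thesis unfolding cp order_prod_list_linear_factors by simp
  next
    case False
    then have "count G z = 0" unfolding G_def count_mset_map_upt by auto
    then show ?thesis by simp
  qed
  then have sub: "G \<subseteq># mset as" by (simp add: subseteq_mset_def)
  have G: "G = mset as"
  proof (rule ccontr)
    assume "G \<noteq> mset as"
    with sub have "G \<subset># mset as" by (simp add: subset_mset.less_le)
    then have "size G < size (mset as)" by (rule mset_subset_size)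
    then show False using len by (simp add: G_def)
  qed
  have "char_poly A = prod_mset (image_mset (\<lambda>a. [:-a, 1:]) G)"
    unfolding cp G by (simp add: prod_mset_prod_list[symmetric])
  also have "\<dots> = (\<Prod>i<N. [:-complex_of_real (g i), 1:])"
    unfolding G_def by (simp add: prod_unfold_prod_mset multiset.map_comp o_def atLeast0LessThan)
  finally show "char_poly A = (\<Prod>i<N. [:-complex_of_real (g i), 1:])" .
qed

lemma real_eigenvalue_listing_sum_order:
  assumes A: "A \<in> carrier_mat N N" and g: "real_eigenvalue_listing N A g"
  shows "(\<Sum>t\<in>{t::real. P t \<and> poly (char_poly A) (complex_of_real t) = 0}.
            Polynomial.order (complex_of_real t) (char_poly A)) = card {i. i < N \<and> P (g i)}"
proof -
  have ord: "Polynomial.order (complex_of_real t) (char_poly A) = card {i. i < N \<and> g i = t}" for t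
    using g unfolding real_eigenvalue_listing_def count_mset_map_upt by simp
  have nz: "char_poly A \<noteq> 0" using degree_monic_char_poly[OF A] by auto
  let ?T = "{t::real. P t \<and> poly (char_poly A) (complex_of_real t) = 0}"
  have T: "?T = {t. P t \<and> (\<exists>i<N. g i = t)}"
    using order_root[of "char_poly A"] nz by (auto simp: ord card_gt_0_iff)
  have "finite ?T" unfolding T by (rule finite_subset[of _ "g ` {..<N}"]) auto
  then have "(\<Sum>t\<in>?T. card {i. i < N \<and> g i = t}) = card (\<Union>t\<in>?T. {i. i < N \<and> g i = t})"
    by (intro card_UN_disjoint[symmetric]) auto
  also have "(\<Union>t\<in>?T. {i. i < N \<and> g i = t}) = {i. i < N \<and> P (g i)}" unfolding T by auto
  finally show ?thesis by (simp add: ord)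
qed

lemma det_eq_0_iff_char_poly_root:
  fixes A :: "'a::field mat"
  assumes A: "A \<in> carrier_mat n n"
  shows "det A = 0 \<longleftrightarrow> poly (char_poly A) 0 = 0"
proof -
  have "char_matrix A 0 = A" using A unfolding char_matrix_def by auto
  then show ?thesis using eigenvalue_det[OF A, of 0] eigenvalue_root_char_poly[OF A, of 0] by simp
qed

lemma invertible_mat_det_nonzero:
  assumes A: "A \<in> carrier_mat n n" and inv: "invertible_mat A"
  shows "det A \<noteq> 0"
proof -
  from inv obtain B where AB: "A * B = 1\<^sub>m (dim_row A)" and BA: "B * A = 1\<^sub>m (dim_row B)"
    unfolding invertible_mat_def inverts_mat_def by blast
  have B: "B \<in> carrier_mat n n"
    using arg_cong[OF BA, of dim_col] arg_cong[OF AB, of dim_col] A by auto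
  have "det A * det B = 1" using det_mult[OF A B] AB A by simp
  then show ?thesis by auto
qed

lemma real_eigenvalue_listing_counts:
  assumes A: "A \<in> carrier_mat N N" and g: "real_eigenvalue_listing N A g"
  shows "Nneg_mat A = card {i. i < N \<and> g i < 0}"
    and "Npos_mat A = card {i. i < N \<and> 0 < g i}"
    and "Polynomial.order 0 (char_poly A) = card {i. i < N \<and> g i = 0}"
    and "det A = 0 \<longleftrightarrow> (\<exists>i<N. g i = 0)"
proof -
  show "Nneg_mat A = card {i. i < N \<and> g i < 0}" "Npos_mat A = card {i. i < N \<and> 0 < g i}"
    unfolding Nneg_mat_def Npos_mat_def
    using real_eigenvalue_listing_sum_order[OF A g, of "\<lambda>t. t < 0"]
      real_eigenvalue_listing_sum_order[OF A g, of "\<lambda>t. 0 < t"] by simp_all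
  show o0: "Polynomial.order 0 (char_poly A) = card {i. i < N \<and> g i = 0}"
    using g unfolding real_eigenvalue_listing_def count_mset_map_upt by simp
  have "char_poly A \<noteq> 0" using degree_monic_char_poly[OF A] by auto
  then have "det A = 0 \<longleftrightarrow> card {i. i < N \<and> g i = 0} \<noteq> 0"
    unfolding det_eq_0_iff_char_poly_root[OF A] o0[symmetric] using order_root by blast
  then show "det A = 0 \<longleftrightarrow> (\<exists>i<N. g i = 0)" by (simp add: card_eq_0_iff)
qed

lemma real_eigenvalue_listing_smult:
  assumes B: "B \<in> carrier_mat N N" and g: "real_eigenvalue_listing N B g" and c: "c \<noteq> 0"
  shows "real_eigenvalue_listing N (complex_of_real c \<cdot>\<^sub>m B) (\<lambda>i. c * g i)"
  unfolding real_eigenvalue_listing_def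
proof
  fix t
  have "count (mset (map (\<lambda>i. c * g i) [0..<N])) t = card {i. i < N \<and> g i = t / c}"
    unfolding count_mset_map_upt using c by (simp add: field_simps)
  also have "\<dots> = Polynomial.order (complex_of_real (t / c)) (char_poly B)"
    using g unfolding real_eigenvalue_listing_def count_mset_map_upt by blast
  also have "\<dots> = Polynomial.order (complex_of_real t) (char_poly (complex_of_real c \<cdot>\<^sub>m B))"
    using order_char_poly_smult[OF B, of "complex_of_real c" "complex_of_real t"] c by simp
  finally show "count (mset (map (\<lambda>i. c * g i) [0..<N])) t =
      Polynomial.order (complex_of_real t) (char_poly (complex_of_real c \<cdot>\<^sub>m B))" .
qed

lemma real_eigenvalue_listing_limit:
  assumes A: "A \<in> carrier_mat N N" and Bk: "\<And>k. B k \<in> carrier_mat N N"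
    and g: "\<And>k. real_eigenvalue_listing N (B k) (g k)"
    and lim_g: "\<And>i. i < N \<Longrightarrow> (\<lambda>k. g k i) \<longlonglongrightarrow> l i"
    and lim_B: "\<And>z. (\<lambda>k. poly (char_poly (B k)) z) \<longlonglongrightarrow> poly (char_poly A) z"
  shows "real_eigenvalue_listing N A l"
proof -
  have "poly (char_poly A) z = (\<Prod>i<N. z - complex_of_real (l i))" for z
  proof (rule LIMSEQ_unique[OF lim_B])
    have "poly (char_poly (B k)) z = (\<Prod>i<N. z - complex_of_real (g k i))" for k
      using g[of k] unfolding real_eigenvalue_listing_iff_char_poly[OF Bk] by (simp add: poly_prod)
    then show "(\<lambda>k. poly (char_poly (B k)) z) \<longlonglongrightarrow> (\<Prod>i<N. z - complex_of_real (l i))"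
      by (simp only:) (intro tendsto_intros lim_g, simp)
  qed
  then have "char_poly A = (\<Prod>i<N. [:-complex_of_real (l i), 1:])"
    by (intro poly_ext) (simp add: poly_prod)
  then show ?thesis using real_eigenvalue_listing_iff_char_poly[OF A] by simp
qed

lemma char_poly_root_norm_le:
  fixes A :: "complex mat"
  assumes A: "A \<in> carrier_mat n n" and w: "poly (char_poly A) w = 0"
  shows "norm w \<le> (\<Sum>i<n. \<Sum>j<n. norm (A $$ (i,j)))"
proof -
  from w eigenvalue_root_char_poly[OF A] obtain v where
    v: "v \<in> carrier_vec n" "v \<noteq> 0\<^sub>v n" "A *\<^sub>v v = w \<cdot>\<^sub>v v"
    unfolding eigenvalue_def eigenvector_def using A by auto
  define M where "M = Max ((\<lambda>i. norm (v $ i)) ` {..<n})"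
  obtain i0 where i0: "i0 < n" "v $ i0 \<noteq> 0"
    using v(1,2) by (metis eq_vecI index_zero_vec(1,2) carrier_vecD)
  have Mge: "norm (v $ i) \<le> M" if "i < n" for i unfolding M_def using that by (intro Max_ge) auto
  have "M \<in> (\<lambda>i. norm (v $ i)) ` {..<n}" unfolding M_def using i0 by (intro Max_in) auto
  then obtain m where m: "m < n" "norm (v $ m) = M" by auto
  have M: "0 < M" using Mge[OF i0(1)] i0(2) by (meson order_less_le_trans zero_less_norm_iff)
  have eq: "w * v $ m = (\<Sum>j<n. A $$ (m,j) * v $ j)"
    using arg_cong[OF v(3), of "\<lambda>u. u $ m"] A v(1) m(1)
    by (simp add: mult_mat_vec_def scalar_prod_def row_def atLeast0LessThan)
  have "norm w * M = norm (w * v $ m)" using m by (simp add: norm_mult)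
  also have "\<dots> \<le> (\<Sum>j<n. norm (A $$ (m,j)) * norm (v $ j))"
    unfolding eq by (rule order_trans[OF norm_sum]) (simp add: norm_mult)
  also have "\<dots> \<le> (\<Sum>j<n. norm (A $$ (m,j))) * M"
    unfolding sum_distrib_right by (rule sum_mono) (use Mge in \<open>auto intro: mult_left_mono\<close>)
  finally have "norm w \<le> (\<Sum>j<n. norm (A $$ (m,j)))" using M by simp
  also have "\<dots> \<le> (\<Sum>i<n. \<Sum>j<n. norm (A $$ (i,j)))"
    by (rule member_le_sum[where f = "\<lambda>i. \<Sum>j<n. norm (A $$ (i,j))"]) (use m in \<open>auto intro: sum_nonneg\<close>)
  finally show ?thesis .
qed

section \<open>Matrix pencils\<close>

lemma pencil_carrier [simp]: "pencil N p L z \<in> carrier_mat N N"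
  unfolding pencil_def by simp

lemma pencil_dim [simp]: "dim_row (pencil N p L z) = N" "dim_col (pencil N p L z) = N"
  unfolding pencil_def by simp_all

lemma pencil_index [simp]:
  "i < N \<Longrightarrow> j < N \<Longrightarrow> pencil N p L z $$ (i,j) = (\<Sum>k\<le>p. z ^ k * L k $$ (i,j))"
  unfolding pencil_def by simp

lemma pencil_at_zero:
  assumes "L 0 \<in> carrier_mat N N"
  shows "pencil N p L 0 = L 0"
proof (rule eq_matI)
  fix i j assume "i < dim_row (L 0)" "j < dim_col (L 0)"
  then have ij: "i < N" "j < N" using assms by auto
  have "(\<Sum>k\<le>p. (0::complex) ^ k * L k $$ (i,j)) = (\<Sum>k\<le>p. if k = 0 then L 0 $$ (i,j) else 0)"
    by (rule sum.cong) auto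
  then show "pencil N p L 0 $$ (i,j) = L 0 $$ (i,j)" using ij by simp
qed (use assms in auto)

lemma hermitian_pencil:
  assumes herm: "\<forall>j\<le>p. hermitian_mat N (L j)"
  shows "hermitian_mat N (pencil N p L (complex_of_real x))"
  unfolding hermitian_mat_def
proof (intro conjI pencil_carrier allI impI)
  fix i j assume ij: "i < N" "j < N"
  have Lh: "L k $$ (i,j) = cnj (L k $$ (j,i))" if "k \<in> {..p}" for k
    using herm that ij unfolding hermitian_mat_def by blast
  show "pencil N p L (complex_of_real x) $$ (i,j) = cnj (pencil N p L (complex_of_real x) $$ (j,i))"
    using ij by (simp add: cnj_sum) (intro sum.cong refl, simp add: Lh)
qed

lemma det_pencil_poly: "\<exists>q. \<forall>z. det (pencil N p L z) = poly q z"
proof -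
  define P where "P = mat N N (\<lambda>(i,j). \<Sum>k\<le>p. monom (L k $$ (i,j)) k)"
  have "poly (det P) z = det (pencil N p L z)" for z
    by (rule poly_det_cong[of _ N]) (auto simp: P_def poly_sum poly_monom mult.commute)
  then show ?thesis by metis
qed

lemma isCont_det:
  fixes M :: "'a::t2_space \<Rightarrow> 'b::real_normed_field mat"
  assumes M: "\<And>s. M s \<in> carrier_mat n n"
    and cont: "\<And>i j. i < n \<Longrightarrow> j < n \<Longrightarrow> isCont (\<lambda>s. M s $$ (i,j)) s0"
  shows "isCont (\<lambda>s. det (M s)) s0"
proof -
  have "(\<lambda>s. det (M s)) =
      (\<lambda>s. \<Sum>\<pi> \<in> {\<pi>. \<pi> permutes {0..<n}}. signof \<pi> * (\<Prod>i = 0..<n. M s $$ (i, \<pi> i)))"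
    using det_def'[OF M] by blast
  moreover have "isCont (\<lambda>s. \<Sum>\<pi> \<in> {\<pi>. \<pi> permutes {0..<n}}. signof \<pi> * (\<Prod>i = 0..<n. M s $$ (i, \<pi> i))) s0"
    by (intro continuous_sum continuous_mult continuous_const continuous_prod cont)
      (auto simp: permutes_in_image)
  ultimately show ?thesis by simp
qed

lemma isCont_char_poly_pencil: "isCont (\<lambda>s. poly (char_poly (pencil N p L s)) z) s0"
proof -
  have "(\<lambda>s. poly (char_poly (pencil N p L s)) z) = (\<lambda>s. det (- char_matrix (pencil N p L s) z))"
    using char_poly_matrix[OF pencil_carrier] by blast
  moreover have "isCont (\<lambda>s. det (- char_matrix (pencil N p L s) z)) s0"
    by (rule isCont_det[of _ N]) (auto simp: char_matrix_def intro!: continuous_intros)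
  ultimately show ?thesis by simp
qed

lemma pencil_char_poly_roots_bounded:
  "\<exists>C. \<forall>s w. norm s \<le> 1 \<longrightarrow> poly (char_poly (pencil N p L s)) w = 0 \<longrightarrow> norm w \<le> C"
proof (intro exI allI impI)
  fix s w :: complex assume s: "norm s \<le> 1" and w: "poly (char_poly (pencil N p L s)) w = 0"
  have entry: "norm (pencil N p L s $$ (a,b)) \<le> (\<Sum>j\<le>p. norm (L j $$ (a,b)))" if "a < N" "b < N" for a b
  proof -
    have "norm (pencil N p L s $$ (a,b)) \<le> (\<Sum>j\<le>p. norm (s ^ j * L j $$ (a,b)))"
      using that by (simp add: norm_sum)
    also have "\<dots> \<le> (\<Sum>j\<le>p. norm (L j $$ (a,b)))"
      using s by (intro sum_mono) (simp add: norm_mult norm_power power_le_one mult_left_le_one_le)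
    finally show ?thesis .
  qed
  have "norm w \<le> (\<Sum>a<N. \<Sum>b<N. norm (pencil N p L s $$ (a,b)))"
    by (rule char_poly_root_norm_le[OF pencil_carrier w])
  also have "\<dots> \<le> (\<Sum>a<N. \<Sum>b<N. \<Sum>j\<le>p. norm (L j $$ (a,b)))"
    by (intro sum_mono entry) auto
  finally show "norm w \<le> (\<Sum>a<N. \<Sum>b<N. \<Sum>j\<le>p. norm (L j $$ (a,b)))" .
qed

lemma pencil_reverse_eq_scaled:
  assumes s: "s \<noteq> 0"
  shows "pencil N p (\<lambda>j. L (p - j)) s = (s ^ p) \<cdot>\<^sub>m pencil N p L (1 / s)"
proof (rule eq_matI)
  fix i j assume "i < dim_row (s ^ p \<cdot>\<^sub>m pencil N p L (1 / s))" "j < dim_col (s ^ p \<cdot>\<^sub>m pencil N p L (1 / s))"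
  then have ij: "i < N" "j < N" by (auto simp: pencil_def)
  have "(\<Sum>k\<le>p. s ^ k * L (p - k) $$ (i,j)) = (\<Sum>k<Suc p. s ^ (p - (Suc p - Suc k)) * L (Suc p - Suc k) $$ (i,j))"
    by (rule sum.cong) auto
  also have "\<dots> = (\<Sum>k<Suc p. s ^ (p - k) * L k $$ (i,j))"
    by (rule sum.nat_diff_reindex[where g = "\<lambda>k. s ^ (p - k) * L k $$ (i,j)"])
  also have "\<dots> = s ^ p * (\<Sum>k\<le>p. (1 / s) ^ k * L k $$ (i,j))"
    unfolding sum_distrib_left lessThan_Suc_atMost
    by (intro sum.cong refl) (use s in \<open>simp add: power_diff field_simps\<close>)
  finally show "pencil N p (\<lambda>j. L (p - j)) s $$ (i,j) = (s ^ p \<cdot>\<^sub>m pencil N p L (1 / s)) $$ (i,j)"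
    using ij by simp
qed (simp_all add: pencil_def)

lemma bounded_family_convergent_subseq:
  fixes X :: "nat \<Rightarrow> nat \<Rightarrow> 'a::heine_borel"
  assumes "\<And>i. i < n \<Longrightarrow> bounded (range (\<lambda>k. X k i))"
  shows "\<exists>r l. strict_mono r \<and> (\<forall>i<n. (\<lambda>k. X (r k) i) \<longlonglongrightarrow> l i)"
  using assms
proof (induction n)
  case 0
  have "strict_mono (id :: nat \<Rightarrow> nat)" by (simp add: strict_mono_def)
  then show ?case by blast
next
  case (Suc n)
  then obtain r l where r: "strict_mono r" and l: "\<forall>i<n. (\<lambda>k. X (r k) i) \<longlonglongrightarrow> l i" by auto
  have "bounded (range (\<lambda>k. X (r k) n))"
    using Suc.prems[of n] by (rule bounded_subset) auto
  then obtain l' r' where r': "strict_mono r'" and l': "((\<lambda>k. X (r k) n) \<circ> r') \<longlonglongrightarrow> l'"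
    using bounded_imp_convergent_subsequence by blast
  have "\<forall>i<Suc n. (\<lambda>k. X ((r \<circ> r') k) i) \<longlonglongrightarrow> (l(n := l')) i"
  proof (intro allI impI)
    fix i assume "i < Suc n"
    then consider "i = n" | "i < n" by linarith
    then show "(\<lambda>k. X ((r \<circ> r') k) i) \<longlonglongrightarrow> (l(n := l')) i"
    proof cases
      case 2
      with LIMSEQ_subseq_LIMSEQ[OF l[rule_format, OF 2] r'] show ?thesis by (simp add: o_def)
    qed (use l' in \<open>simp add: o_def\<close>)
  qed
  with strict_mono_o[OF r r'] show ?case by blast
qed

section \<open>Sign jumps of real functions\<close>

definition pos_right :: "(real \<Rightarrow> real) \<Rightarrow> real \<Rightarrow> int" where
  "pos_right f x = of_bool (\<forall>\<^sub>F y in at_right x. 0 < f y)"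

definition pos_left :: "(real \<Rightarrow> real) \<Rightarrow> real \<Rightarrow> int" where
  "pos_left f x = of_bool (\<forall>\<^sub>F y in at_left x. 0 < f y)"

lemma eventually_sgn_eq_tendsto:
  fixes f :: "'a \<Rightarrow> real"
  assumes lim: "(f \<longlongrightarrow> l) F" and l: "l \<noteq> 0"
  shows "\<forall>\<^sub>F y in F. sgn (f y) = sgn l"
proof (cases "0 < l")
  case True
  from order_tendstoD(1)[OF lim True] show ?thesis by eventually_elim (use True in auto)
next
  case False
  with l have "l < 0" by simp
  from order_tendstoD(2)[OF lim this] show ?thesis by eventually_elim (use \<open>l < 0\<close> in auto)
qed

lemma eventually_sgn_const_iff:
  fixes f :: "'a \<Rightarrow> real"
  assumes F: "F \<noteq> bot" and sgn: "\<forall>\<^sub>F y in F. sgn (f y) = sgn c"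
  shows "(\<forall>\<^sub>F y in F. 0 < f y) \<longleftrightarrow> 0 < c" and "(\<forall>\<^sub>F y in F. f y < 0) \<longleftrightarrow> c < 0"
proof -
  have "\<forall>\<^sub>F y in F. (0 < f y) = (0 < c)" using sgn by eventually_elim (metis sgn_greater)
  then have "(\<forall>\<^sub>F y in F. 0 < f y) \<longleftrightarrow> (\<forall>\<^sub>F y in F. 0 < c)" by (rule eventually_subst)
  then show "(\<forall>\<^sub>F y in F. 0 < f y) \<longleftrightarrow> 0 < c" using F by simp
  have "\<forall>\<^sub>F y in F. (f y < 0) = (c < 0)" using sgn by eventually_elim (metis sgn_less)
  then have "(\<forall>\<^sub>F y in F. f y < 0) \<longleftrightarrow> (\<forall>\<^sub>F y in F. c < 0)" by (rule eventually_subst)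
  then show "(\<forall>\<^sub>F y in F. f y < 0) \<longleftrightarrow> c < 0" using F by simp
qed

lemma pos_right_pos_left_nonzero:
  assumes "isCont f x" and "f x \<noteq> 0"
  shows "pos_right f x = of_bool (0 < f x)" and "pos_left f x = of_bool (0 < f x)"
proof -
  have "\<forall>\<^sub>F y in at x. sgn (f y) = sgn (f x)"
    using assms by (intro eventually_sgn_eq_tendsto) (simp_all add: isCont_def)
  then have "\<forall>\<^sub>F y in at_right x. sgn (f y) = sgn (f x)" "\<forall>\<^sub>F y in at_left x. sgn (f y) = sgn (f x)"
    by (simp_all add: eventually_at_split)
  then show "pos_right f x = of_bool (0 < f x)" "pos_left f x = of_bool (0 < f x)"
    unfolding pos_right_def pos_left_def by (simp_all add: eventually_sgn_const_iff)
qed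

lemma card_eventually_neg_split:
  fixes f :: "nat \<Rightarrow> real \<Rightarrow> real"
  assumes F: "F \<le> at x" "F \<noteq> bot" and cont: "\<And>i. i < N \<Longrightarrow> isCont (f i) x"
  shows "card {i. i < N \<and> (\<forall>\<^sub>F y in F. f i y < 0)} =
         card {i. i < N \<and> f i x < 0} + card {i. i < N \<and> f i x = 0 \<and> (\<forall>\<^sub>F y in F. f i y < 0)}"
proof -
  have "(\<forall>\<^sub>F y in F. f i y < 0) \<longleftrightarrow> f i x < 0" if "i < N" "f i x \<noteq> 0" for i
  proof -
    have "\<forall>\<^sub>F y in at x. sgn (f i y) = sgn (f i x)"
      using cont[OF that(1)] that(2) by (intro eventually_sgn_eq_tendsto) (simp_all add: isCont_def)
    then have "\<forall>\<^sub>F y in F. sgn (f i y) = sgn (f i x)" by (rule filter_leD[OF F(1)])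
    then show ?thesis by (rule eventually_sgn_const_iff(2)[OF F(2)])
  qed
  then have "{i. i < N \<and> (\<forall>\<^sub>F y in F. f i y < 0)} =
      {i. i < N \<and> f i x < 0} \<union> {i. i < N \<and> f i x = 0 \<and> (\<forall>\<^sub>F y in F. f i y < 0)}"
    by auto
  then show ?thesis by (simp add: card_Un_disjoint disjoint_iff)
qed

lemma zero_free_interval_sign:
  fixes f :: "real \<Rightarrow> real"
  assumes cont: "continuous_on {c<..<d} f" and nz: "\<forall>y\<in>{c<..<d}. f y \<noteq> 0"
  shows "(\<forall>y\<in>{c<..<d}. 0 < f y) \<or> (\<forall>y\<in>{c<..<d}. f y < 0)"
proof (rule ccontr)
  assume "\<not> ?thesis"
  then obtain y1 y2 where y: "y1 \<in> {c<..<d}" "y2 \<in> {c<..<d}" "\<not> 0 < f y1" "\<not> f y2 < 0" by blast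
  with nz have "f y1 < 0" "0 < f y2" by (auto simp: not_less less_le)
  moreover have "connected (f ` {c<..<d})" by (rule connected_continuous_image[OF cont]) simp
  ultimately have "0 \<in> f ` {c<..<d}"
    using connectedD_interval[of "f ` {c<..<d}" "f y1" "f y2" 0] y(1,2) by auto
  with nz show False by auto
qed

lemma pos_right_eq_pos_left_zero_free:
  fixes f :: "real \<Rightarrow> real"
  assumes cd: "c < d" and cont: "continuous_on {c<..<d} f" and nz: "\<forall>y\<in>{c<..<d}. f y \<noteq> 0"
  shows "pos_right f c = pos_left f d"
proof -
  from zero_free_interval_sign[OF cont nz] obtain s :: real
    where s: "\<forall>y\<in>{c<..<d}. sgn (f y) = sgn s"
  proof
    assume "\<forall>y\<in>{c<..<d}. 0 < f y" then show ?thesis by (intro that[of 1]) auto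
  next
    assume "\<forall>y\<in>{c<..<d}. f y < 0" then show ?thesis by (intro that[of "-1"]) auto
  qed
  have "\<forall>\<^sub>F y in at_right c. y \<in> {c<..<d}" using cd eventually_at_right[of c d] by auto
  then have R: "\<forall>\<^sub>F y in at_right c. sgn (f y) = sgn s" by eventually_elim (use s in auto)
  have "\<forall>\<^sub>F y in at_left d. y \<in> {c<..<d}" using cd eventually_at_left[of c d] by auto
  then have L: "\<forall>\<^sub>F y in at_left d. sgn (f y) = sgn s" by eventually_elim (use s in auto)
  have "at_right c \<noteq> bot" "at_left d \<noteq> bot" by simp_all
  then show ?thesis unfolding pos_right_def pos_left_def
    using eventually_sgn_const_iff(1)[OF _ R] eventually_sgn_const_iff(1)[OF _ L] by simp
qed

lemma sum_sign_jumps_telescope: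
  fixes f :: "real \<Rightarrow> real"
  assumes "finite S" and "a < b" and "continuous_on {a<..<b} f"
    and "S \<subseteq> {a<..<b}" and "{y\<in>{a<..<b}. f y = 0} \<subseteq> S"
  shows "(\<Sum>z\<in>S. pos_right f z - pos_left f z) = pos_left f b - pos_right f a"
  using assms
proof (induction S arbitrary: b rule: finite_linorder_max_induct)
  case empty
  then show ?case using pos_right_eq_pos_left_zero_free by force
next
  case (insert m S)
  have m: "a < m" "m < b" and S: "S \<subseteq> {a<..<m}" using insert.prems insert.hyps(2) by auto
  have IH: "(\<Sum>z\<in>S. pos_right f z - pos_left f z) = pos_left f m - pos_right f a"
  proof (rule insert.IH[OF m(1) _ S])
    show "continuous_on {a<..<m} f" using insert.prems(2) by (rule continuous_on_subset) (use m in auto)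
    show "{y\<in>{a<..<m}. f y = 0} \<subseteq> S" using insert.prems(4) m by auto
  qed
  have "pos_right f m = pos_left f b"
  proof (rule pos_right_eq_pos_left_zero_free[OF m(2)])
    show "continuous_on {m<..<b} f" using insert.prems(2) by (rule continuous_on_subset) (use m in auto)
    show "\<forall>y\<in>{m<..<b}. f y \<noteq> 0"
    proof
      fix y assume y: "y \<in> {m<..<b}"
      then have "y \<notin> insert m S" using insert.hyps(2) by force
      moreover have "y \<in> {a<..<b}" using y m by auto
      ultimately show "f y \<noteq> 0" using subsetD[OF insert.prems(4), of y] by auto
    qed
  qed
  moreover have "m \<notin> S" using insert.hyps(2) by auto
  ultimately show ?case using insert.hyps(1) IH by simp
qed

section \<open>Real analytic functions near a zero\<close>

lemma local_powser_deriv: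
  fixes a :: "nat \<Rightarrow> real"
  assumes r: "0 < r" and S: "\<forall>y. \<bar>y - x\<bar> < r \<longrightarrow> (\<lambda>n. a n * (y - x) ^ n) sums f y"
  shows "\<forall>y. \<bar>y - x\<bar> < r \<longrightarrow>
    (\<lambda>n. diffs a n * (y - x) ^ n) sums deriv f y \<and> (f has_real_derivative deriv f y) (at y)"
proof (intro allI impI)
  fix y assume y: "\<bar>y - x\<bar> < r"
  have sm: "summable (\<lambda>n. a n * z ^ n)" if "norm z < r" for z :: real
    using S[rule_format, of "x + z"] that by (simp add: sums_iff)
  have "((\<lambda>z. \<Sum>n. a n * z ^ n) has_real_derivative (\<Sum>n. diffs a n * (y - x) ^ n)) (at (y - x))"
    by (rule termdiffs_strong'[OF sm]) (use y in auto)
  moreover have "((\<lambda>y. y - x) has_real_derivative 1) (at y)" by (auto intro!: derivative_eq_intros)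
  ultimately have "((\<lambda>y. \<Sum>n. a n * (y - x) ^ n) has_real_derivative (\<Sum>n. diffs a n * (y - x) ^ n)) (at y)"
    using DERIV_chain2 by fastforce
  then have D: "(f has_real_derivative (\<Sum>n. diffs a n * (y - x) ^ n)) (at y)"
  proof (rule has_field_derivative_transform_within_open[where S = "ball x r"])
    show "y \<in> ball x r" using y by (simp add: dist_real_def abs_minus_commute)
    show "(\<Sum>n. a n * (z - x) ^ n) = f z" if "z \<in> ball x r" for z
      using S that by (simp add: dist_real_def abs_minus_commute sums_iff)
  qed simp
  have "summable (\<lambda>n. diffs a n * (y - x) ^ n)"
    by (rule termdiff_converges[of _ r]) (use y sm in auto)
  then show "(\<lambda>n. diffs a n * (y - x) ^ n) sums deriv f y \<and> (f has_real_derivative deriv f y) (at y)"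
    using D DERIV_imp_deriv[OF D] by (simp add: summable_sums)
qed

lemma local_powser_higher_deriv:
  fixes a :: "nat \<Rightarrow> real"
  assumes r: "0 < r" and S: "\<forall>y. \<bar>y - x\<bar> < r \<longrightarrow> (\<lambda>n. a n * (y - x) ^ n) sums f y"
  shows "\<forall>y. \<bar>y - x\<bar> < r \<longrightarrow> (\<lambda>n. (diffs ^^ m) a n * (y - x) ^ n) sums (deriv ^^ m) f y"
proof (induction m)
  case (Suc m)
  from local_powser_deriv[OF r Suc] show ?case by simp
qed (use S in simp)

lemma diffs_funpow: "(diffs ^^ m) (a :: nat \<Rightarrow> real) n = fact (n + m) / fact n * a (n + m)"
proof (induction m arbitrary: n)
  case (Suc m)
  have "(diffs ^^ Suc m) a n = of_nat (Suc n) * (fact (Suc n + m) / fact (Suc n) * a (Suc n + m))"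
    by (simp add: diffs_def Suc)
  also have "\<dots> = fact (n + Suc m) / fact n * a (n + Suc m)"
    by (simp add: field_simps del: of_nat_Suc)
  finally show ?case .
qed simp

lemma local_powser_higher_deriv_centre:
  fixes a :: "nat \<Rightarrow> real"
  assumes r: "0 < r" and S: "\<forall>y. \<bar>y - x\<bar> < r \<longrightarrow> (\<lambda>n. a n * (y - x) ^ n) sums f y"
  shows "(deriv ^^ m) f x = fact m * a m"
proof -
  have "(\<lambda>n. (diffs ^^ m) a n * 0 ^ n) sums (deriv ^^ m) f x"
    using local_powser_higher_deriv[OF r S, of m, rule_format, of x] r by simp
  then have "(deriv ^^ m) f x = (\<Sum>n. (diffs ^^ m) a n * 0 ^ n)" by (rule sums_unique)
  then have "(deriv ^^ m) f x = (diffs ^^ m) a 0" by simp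
  then show ?thesis by (simp add: diffs_funpow)
qed

lemma real_analytic_isCont:
  assumes "real_analytic f" shows "isCont f x"
proof -
  obtain r a where r: "0 < r" and S: "\<forall>y. \<bar>y - x\<bar> < r \<longrightarrow> (\<lambda>n. a n * (y - x) ^ n) sums f y"
    using assms unfolding real_analytic_def by blast
  then have "(f has_real_derivative deriv f x) (at x)" using local_powser_deriv[OF r S] by auto
  then show ?thesis by (rule DERIV_isCont)
qed

lemma local_powser_factor:
  fixes a :: "nat \<Rightarrow> real"
  assumes r: "0 < r" and S: "\<forall>y. \<bar>y - x\<bar> < r \<longrightarrow> (\<lambda>n. a n * (y - x) ^ n) sums f y"
    and below: "\<forall>n<k. a n = 0"
  shows "\<exists>g. isCont g x \<and> g x = a k \<and> (\<forall>\<^sub>F y in at x. f y = (y - x) ^ k * g y)"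
proof -
  define g where "g y = (\<Sum>n. a (n + k) * (y - x) ^ n)" for y
  have sm: "summable (\<lambda>n. a (n + k) * z ^ n)" if "norm z < r" for z :: real
  proof -
    have "(\<lambda>n. a n * z ^ n) sums f (x + z)" using S[rule_format, of "x + z"] that by simp
    then show ?thesis by (simp add: sums_iff summable_powser_ignore_initial_segment)
  qed
  have fg: "f y = (y - x) ^ k * g y" if y: "\<bar>y - x\<bar> < r" for y
  proof -
    have "(\<Sum>i<k. a i * (y - x) ^ i) = 0" using below by (intro sum.neutral) simp
    then have "(\<lambda>n. a (n + k) * (y - x) ^ (n + k)) sums f y"
      using sums_split_initial_segment[OF S[rule_format, OF y], of k] by simp
    moreover have "(\<lambda>n. a (n + k) * (y - x) ^ (n + k)) sums ((y - x) ^ k * g y)"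
      using sums_mult[OF summable_sums[OF sm], of "y - x" "(y - x) ^ k"] y
      unfolding g_def by (simp add: power_add mult_ac)
    ultimately show ?thesis by (rule sums_unique2)
  qed
  have "((\<lambda>z. \<Sum>n. a (n + k) * z ^ n) has_real_derivative (\<Sum>n. diffs (\<lambda>n. a (n + k)) n * 0 ^ n)) (at 0)"
    by (rule termdiffs_strong'[of r]) (use sm r in auto)
  then have "isCont (\<lambda>z. \<Sum>n. a (n + k) * z ^ n) (x - x)" by (simp add: DERIV_isCont)
  then have "isCont g x" unfolding g_def by (rule isCont_o2[rotated]) (auto intro!: continuous_intros)
  moreover have "\<forall>\<^sub>F y in at x. f y = (y - x) ^ k * g y"
    unfolding eventually_at using r fg by (intro exI[of _ r]) (auto simp: dist_real_def)
  ultimately show ?thesis by (auto simp: g_def)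
qed

lemma real_analytic_sgn_near:
  fixes f :: "real \<Rightarrow> real"
  assumes an: "real_analytic f" and iso: "\<forall>\<^sub>F y in at x. f y \<noteq> 0"
  defines "k \<equiv> vanish_order f x"
  shows "(deriv ^^ k) f x \<noteq> 0"
    and "\<forall>\<^sub>F y in at x. sgn (f y) = sgn (y - x) ^ k * sgn ((deriv ^^ k) f x)"
proof -
  obtain r a where r: "0 < r" and S: "\<forall>y. \<bar>y - x\<bar> < r \<longrightarrow> (\<lambda>n. a n * (y - x) ^ n) sums f y"
    using an unfolding real_analytic_def by blast
  have D: "(deriv ^^ n) f x = fact n * a n" for n by (rule local_powser_higher_deriv_centre[OF r S])
  have "\<exists>n. a n \<noteq> 0"
  proof (rule ccontr)
    assume "\<not> (\<exists>n. a n \<noteq> 0)"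
    then have "f y = 0" if "\<bar>y - x\<bar> < r" for y using S that by (simp add: sums_iff)
    then have "\<forall>\<^sub>F y in at x. f y = 0"
      unfolding eventually_at using r by (intro exI[of _ r]) (auto simp: dist_real_def)
    with iso have "\<forall>\<^sub>F y in at x. False" by eventually_elim simp
    then show False by simp
  qed
  then have "\<exists>n. (deriv ^^ n) f x \<noteq> 0" by (simp add: D)
  then show k: "(deriv ^^ k) f x \<noteq> 0"
    unfolding k_def vanish_order_def by (rule LeastI_ex)
  have "a n = 0" if "n < k" for n
    using not_less_Least[OF that[unfolded k_def vanish_order_def]] by (simp add: D)
  then obtain g where g: "isCont g x" "g x = a k" and fg: "\<forall>\<^sub>F y in at x. f y = (y - x) ^ k * g y"
    using local_powser_factor[OF r S, of k] by auto
  have "\<forall>\<^sub>F y in at x. sgn (g y) = sgn (a k)"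
    using g k by (intro eventually_sgn_eq_tendsto) (auto simp: isCont_def D)
  with fg show "\<forall>\<^sub>F y in at x. sgn (f y) = sgn (y - x) ^ k * sgn ((deriv ^^ k) f x)"
    by eventually_elim (simp add: D sgn_mult)
qed

lemma real_analytic_one_sided_signs:
  fixes f :: "real \<Rightarrow> real"
  assumes an: "real_analytic f" and iso: "\<forall>\<^sub>F y in at x. f y \<noteq> 0"
  defines "k \<equiv> vanish_order f x" and "D \<equiv> (deriv ^^ vanish_order f x) f x"
  shows "(\<forall>\<^sub>F y in at_right x. 0 < f y) \<longleftrightarrow> 0 < D"
    and "(\<forall>\<^sub>F y in at_right x. f y < 0) \<longleftrightarrow> D < 0"
    and "(\<forall>\<^sub>F y in at_left x. 0 < f y) \<longleftrightarrow> 0 < (-1) ^ k * D"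
    and "(\<forall>\<^sub>F y in at_left x. f y < 0) \<longleftrightarrow> (-1) ^ k * D < 0"
proof -
  have near: "\<forall>\<^sub>F y in at x. sgn (f y) = sgn (y - x) ^ k * sgn D"
    using real_analytic_sgn_near(2)[OF an iso] unfolding k_def D_def .
  have "\<forall>\<^sub>F y in at_right x. sgn (f y) = sgn (y - x) ^ k * sgn D" "\<forall>\<^sub>F y in at_right x. x < y"
    using near by (simp_all add: eventually_at_split eventually_at_right_less)
  then have "\<forall>\<^sub>F y in at_right x. sgn (f y) = sgn D" by eventually_elim simp
  then show "(\<forall>\<^sub>F y in at_right x. 0 < f y) \<longleftrightarrow> 0 < D" "(\<forall>\<^sub>F y in at_right x. f y < 0) \<longleftrightarrow> D < 0"
    by (simp_all add: eventually_sgn_const_iff)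
  have "\<forall>\<^sub>F y in at_left x. sgn (f y) = sgn (y - x) ^ k * sgn D"
    using near by (simp add: eventually_at_split)
  moreover have "\<forall>\<^sub>F y in at_left x. y < x" by (simp add: eventually_at_filter)
  ultimately have "\<forall>\<^sub>F y in at_left x. sgn (f y) = sgn ((-1) ^ k * D)" by eventually_elim (simp add: sgn_mult)
  then show "(\<forall>\<^sub>F y in at_left x. 0 < f y) \<longleftrightarrow> 0 < (-1) ^ k * D"
    "(\<forall>\<^sub>F y in at_left x. f y < 0) \<longleftrightarrow> (-1) ^ k * D < 0"
    by (simp_all add: eventually_sgn_const_iff)
qed

lemma pos_right_pos_left_isolated:
  fixes f :: "real \<Rightarrow> real"
  assumes an: "real_analytic f" and iso: "\<forall>\<^sub>F y in at x. f y \<noteq> 0"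
  shows "pos_right f x = 1 - of_bool (\<forall>\<^sub>F y in at_right x. f y < 0)"
    and "pos_left f x = 1 - of_bool (\<forall>\<^sub>F y in at_left x. f y < 0)"
proof -
  have jump: "of_bool (0 < c) = (1::int) - of_bool (c < 0)" if "c \<noteq> 0" for c :: real
    using that by auto
  have D: "(deriv ^^ vanish_order f x) f x \<noteq> 0" by (rule real_analytic_sgn_near(1)[OF an iso])
  then have D': "(-1) ^ vanish_order f x * (deriv ^^ vanish_order f x) f x \<noteq> 0" by simp
  show "pos_right f x = 1 - of_bool (\<forall>\<^sub>F y in at_right x. f y < 0)"
    unfolding pos_right_def real_analytic_one_sided_signs[OF an iso] by (rule jump[OF D])
  show "pos_left f x = 1 - of_bool (\<forall>\<^sub>F y in at_left x. f y < 0)"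
    unfolding pos_left_def real_analytic_one_sided_signs[OF an iso] by (rule jump[OF D'])
qed

lemma kappa_branch_eq_sign_jump:
  fixes f :: "real \<Rightarrow> real"
  assumes an: "real_analytic f" and iso: "\<forall>\<^sub>F y in at x. f y \<noteq> 0"
  shows "kappa_plus_branch f x - kappa_minus_branch f x = pos_right f x - pos_left f x"
proof -
  define k where "k = vanish_order f x"
  define D where "D = (deriv ^^ k) f x"
  have D: "D \<noteq> 0" using real_analytic_sgn_near(1)[OF an iso] unfolding D_def k_def .
  have jump: "pos_right f x - pos_left f x = of_bool (0 < D) - of_bool (0 < (-1) ^ k * D)"
    unfolding pos_right_def pos_left_def real_analytic_one_sided_signs[OF an iso]
      k_def[symmetric] D_def[symmetric] ..
  show ?thesis
  proof (cases "even k")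
    case True
    then show ?thesis
      unfolding jump kappa_plus_branch_def kappa_minus_branch_def Let_def k_def[symmetric] by simp
  next
    case False
    then obtain b where b: "k = 2 * b + 1" by (auto elim: oddE)
    have neg: "(-1::real) ^ k = -1" using False by simp
    define s :: int where "s = (if 0 < D then 1 else -1)"
    have "vanish_sign f x = s" unfolding vanish_sign_def s_def D_def k_def ..
    then have "kappa_plus_branch f x - kappa_minus_branch f x = (int k + s) div 2 - (int k - s) div 2"
      unfolding kappa_plus_branch_def kappa_minus_branch_def Let_def k_def[symmetric] using False by simp
    also have "\<dots> = s"
    proof -
      have "(int k + t) div 2 - (int k - t) div 2 = t" if "t = 1 \<or> t = -1" for t :: int
        using that b by presburger
      then show ?thesis by (simp add: s_def)
    qed
    also have "s = pos_right f x - pos_left f x" unfolding jump s_def neg using D by auto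
    finally show ?thesis .
  qed
qed

lemma kappa_eq_sum_zero_branches:
  assumes an: "\<And>i. i < N \<Longrightarrow> real_analytic (mu i)"
    and iso: "\<And>i. i < N \<Longrightarrow> \<forall>\<^sub>F y in at x. mu i y \<noteq> 0"
  shows "kappa N mu x = (\<Sum>i\<in>{i. i < N \<and> mu i x = 0}. pos_right (mu i) x - pos_left (mu i) x)"
  unfolding kappa_def kappa_plus_def kappa_minus_def sum_subtractf[symmetric]
  by (intro sum.cong refl kappa_branch_eq_sign_jump an iso) auto

lemma kappa_eq_sum_sign_jumps:
  assumes an: "\<And>i. i < N \<Longrightarrow> real_analytic (mu i)"
    and iso: "\<And>i. i < N \<Longrightarrow> \<forall>\<^sub>F y in at x. mu i y \<noteq> 0"
  shows "kappa N mu x = (\<Sum>i<N. pos_right (mu i) x - pos_left (mu i) x)"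
proof -
  have "kappa N mu x = (\<Sum>i\<in>{i. i < N \<and> mu i x = 0}. pos_right (mu i) x - pos_left (mu i) x)"
    by (rule kappa_eq_sum_zero_branches[OF an iso])
  also have "\<dots> = (\<Sum>i<N. pos_right (mu i) x - pos_left (mu i) x)"
    by (intro sum.mono_neutral_left) (auto simp: pos_right_pos_left_nonzero real_analytic_isCont an)
  finally show ?thesis .
qed

lemma abs_kappa_le_card_zero_branches:
  assumes an: "\<And>i. i < N \<Longrightarrow> real_analytic (mu i)"
    and iso: "\<And>i. i < N \<Longrightarrow> \<forall>\<^sub>F y in at x. mu i y \<noteq> 0"
  shows "\<bar>kappa N mu x\<bar> \<le> int (card {i. i < N \<and> mu i x = 0})"
proof -
  have "kappa N mu x = (\<Sum>i\<in>{i. i < N \<and> mu i x = 0}. pos_right (mu i) x - pos_left (mu i) x)"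
    by (rule kappa_eq_sum_zero_branches[OF an iso])
  then have "\<bar>kappa N mu x\<bar> \<le> (\<Sum>i\<in>{i. i < N \<and> mu i x = 0}. \<bar>pos_right (mu i) x - pos_left (mu i) x\<bar>)"
    by (simp only: sum_abs)
  also have "\<dots> \<le> (\<Sum>i\<in>{i. i < N \<and> mu i x = 0}. 1)"
    by (intro sum_mono) (simp add: pos_right_def pos_left_def of_bool_def)
  finally show ?thesis by simp
qed

section \<open>Eigenvalue branches at infinity\<close>

lemma scaled_branches_converge:
  fixes mu :: "nat \<Rightarrow> real \<Rightarrow> real" and \<sigma> :: "nat \<Rightarrow> real"
  assumes Lp: "L p \<in> carrier_mat N N"
    and br: "\<And>x. real_eigenvalue_listing N (pencil N p L (complex_of_real x)) (\<lambda>i. mu i x)"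
    and \<sigma>: "\<And>k. \<sigma> k \<noteq> 0" "\<And>k. \<bar>\<sigma> k\<bar> \<le> 1" and \<sigma>0: "\<sigma> \<longlonglongrightarrow> 0"
  shows "\<exists>r l. strict_mono r \<and> real_eigenvalue_listing N (L p) l \<and>
           (\<forall>i<N. (\<lambda>k. \<sigma> (r k) ^ p * mu i (1 / \<sigma> (r k))) \<longlonglongrightarrow> l i)"
proof -
  let ?R = "pencil N p (\<lambda>j. L (p - j))"
  define \<nu> where "\<nu> k i = \<sigma> k ^ p * mu i (1 / \<sigma> k)" for k i
  have listing: "real_eigenvalue_listing N (?R (complex_of_real (\<sigma> k))) (\<nu> k)" for k
  proof -
    have eq: "?R (complex_of_real (\<sigma> k)) =
        complex_of_real (\<sigma> k ^ p) \<cdot>\<^sub>m pencil N p L (complex_of_real (1 / \<sigma> k))"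
      using pencil_reverse_eq_scaled[of "complex_of_real (\<sigma> k)"] \<sigma>(1) by simp
    show ?thesis unfolding eq \<nu>_def
      by (rule real_eigenvalue_listing_smult[OF pencil_carrier br]) (simp add: \<sigma>(1))
  qed
  obtain C where C: "\<And>s w. norm s \<le> 1 \<Longrightarrow> poly (char_poly (?R s)) w = 0 \<Longrightarrow> norm w \<le> C"
    using pencil_char_poly_roots_bounded by blast
  have "bounded (range (\<lambda>k. \<nu> k i))" if i: "i < N" for i
  proof -
    have root: "poly (char_poly (?R (complex_of_real (\<sigma> k)))) (complex_of_real (\<nu> k i)) = 0" for k
      using listing[of k] i
      unfolding real_eigenvalue_listing_iff_char_poly[OF pencil_carrier] by (auto simp: poly_prod)
    have "\<bar>\<nu> k i\<bar> \<le> C" for k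
      using C[of "complex_of_real (\<sigma> k)" "complex_of_real (\<nu> k i)"] \<sigma>(2)[of k] root[of k] by simp
    then show ?thesis unfolding bounded_iff by auto
  qed
  then obtain r l where r: "strict_mono r" and l: "\<forall>i<N. (\<lambda>k. \<nu> (r k) i) \<longlonglongrightarrow> l i"
    using bounded_family_convergent_subseq by blast
  have lim0: "(\<lambda>k. complex_of_real (\<sigma> (r k))) \<longlonglongrightarrow> 0"
    using tendsto_of_real[OF LIMSEQ_subseq_LIMSEQ[OF \<sigma>0 r]] by (simp add: o_def)
  have cp: "(\<lambda>k. poly (char_poly (?R (complex_of_real (\<sigma> (r k))))) z) \<longlonglongrightarrow> poly (char_poly (?R 0)) z"
    for z using isCont_tendsto_compose[OF isCont_char_poly_pencil[where L = "\<lambda>j. L (p - j)" and z = z] lim0] .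
  have R0: "?R 0 = L p" by (rule pencil_at_zero[of "\<lambda>j. L (p - j)" N p, unfolded diff_zero, OF Lp])
  have "real_eigenvalue_listing N (L p) l"
    by (rule real_eigenvalue_listing_limit[where B = "\<lambda>k. ?R (complex_of_real (\<sigma> (r k)))"
          and g = "\<lambda>k. \<nu> (r k)"]) (use Lp listing l cp R0 in auto)
  then show ?thesis using r l unfolding \<nu>_def by blast
qed

lemma far_point_branch_signs:
  fixes mu :: "nat \<Rightarrow> real \<Rightarrow> real" and e B :: real
  assumes Lp: "L p \<in> carrier_mat N N"
    and br: "\<And>x. real_eigenvalue_listing N (pencil N p L (complex_of_real x)) (\<lambda>i. mu i x)"
    and p: "odd p" and e: "e = 1 \<or> e = -1"
  shows "\<exists>l x. real_eigenvalue_listing N (L p) l \<and> B \<le> e * x \<and>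
           (\<forall>i<N. l i \<noteq> 0 \<longrightarrow> sgn (mu i x) = e * sgn (l i))"
proof -
  define c where "c = max B 1"
  define \<sigma> where "\<sigma> k = e / (c + real k)" for k
  have c: "1 \<le> c" "B \<le> c" unfolding c_def by auto
  have \<sigma>: "\<And>k. \<sigma> k \<noteq> 0" "\<And>k. \<bar>\<sigma> k\<bar> \<le> 1"
    using e c unfolding \<sigma>_def by (auto simp: abs_div)
  have "filterlim (\<lambda>k. c + real k) at_infinity sequentially"
    by (rule filterlim_at_top_imp_at_infinity)
      (rule filterlim_tendsto_add_at_top[OF tendsto_const filterlim_real_sequentially])
  then have "\<sigma> \<longlonglongrightarrow> 0" unfolding \<sigma>_def by (rule tendsto_divide_0[OF tendsto_const])
  then obtain r l where r: "strict_mono r" and l: "real_eigenvalue_listing N (L p) l"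
    and lim: "\<forall>i<N. (\<lambda>k. \<sigma> (r k) ^ p * mu i (1 / \<sigma> (r k))) \<longlonglongrightarrow> l i"
    using scaled_branches_converge[OF Lp br, of \<sigma>] \<sigma> by blast
  have "\<forall>\<^sub>F k in sequentially. \<forall>i\<in>{i. i < N \<and> l i \<noteq> 0}.
      sgn (\<sigma> (r k) ^ p * mu i (1 / \<sigma> (r k))) = sgn (l i)"
    using lim by (intro eventually_ball_finite) (auto intro: eventually_sgn_eq_tendsto)
  then obtain K where K: "\<forall>i. i < N \<and> l i \<noteq> 0 \<longrightarrow> sgn (\<sigma> (r K) ^ p * mu i (1 / \<sigma> (r K))) = sgn (l i)"
    unfolding eventually_sequentially by auto
  define x where "x = 1 / \<sigma> (r K)"
  have ee: "e * e = 1" using e by auto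
  then have x: "e * x = c + real (r K)" unfolding x_def \<sigma>_def using e by auto
  have "0 < c + real (r K)" using c by linarith
  then have "sgn (\<sigma> (r K)) = e" using e unfolding \<sigma>_def by (auto simp: sgn_if)
  then have sgn_scale: "sgn (\<sigma> (r K) ^ p) = e" using e p by auto
  have "\<forall>i<N. l i \<noteq> 0 \<longrightarrow> sgn (mu i x) = e * sgn (l i)"
  proof (intro allI impI)
    fix i assume "i < N" "l i \<noteq> 0"
    with K sgn_scale have "e * sgn (mu i x) = sgn (l i)"
      unfolding x_def by (simp add: sgn_mult)
    then have "e * (e * sgn (mu i x)) = e * sgn (l i)" by simp
    then show "sgn (mu i x) = e * sgn (l i)" using ee by (simp add: mult.assoc[symmetric])
  qed
  moreover have "B \<le> e * x" using x c by simp
  ultimately show ?thesis using l by blast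
qed

lemma far_point_sign_count:
  fixes mu :: "nat \<Rightarrow> real \<Rightarrow> real" and e B :: real
  assumes Lp: "L p \<in> carrier_mat N N" and inv: "invertible_mat (L p)"
    and br: "\<And>x. real_eigenvalue_listing N (pencil N p L (complex_of_real x)) (\<lambda>i. mu i x)"
    and p: "odd p" and e: "e = 1 \<or> e = -1"
  shows "\<exists>x. B \<le> e * x \<and> (\<forall>i<N. mu i x \<noteq> 0) \<and>
    card {i. i < N \<and> 0 < mu i x} = (if e = 1 then Npos_mat (L p) else Nneg_mat (L p)) \<and>
    card {i. i < N \<and> mu i x < 0} = (if e = 1 then Nneg_mat (L p) else Npos_mat (L p))"
proof -
  obtain l x where l: "real_eigenvalue_listing N (L p) l" and x: "B \<le> e * x"
    and sg: "\<forall>i<N. l i \<noteq> 0 \<longrightarrow> sgn (mu i x) = e * sgn (l i)"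
    using far_point_branch_signs[OF Lp br p e] by blast
  have l0: "l i \<noteq> 0" if "i < N" for i
    using real_eigenvalue_listing_counts(4)[OF Lp l] invertible_mat_det_nonzero[OF Lp inv] that by blast
  then have sgn_mu: "sgn (mu i x) = sgn (e * l i)" if "i < N" for i
    using sg e that by (auto simp: sgn_mult)
  have nz: "\<forall>i<N. mu i x \<noteq> 0"
  proof (intro allI impI notI)
    fix i assume i: "i < N" and "mu i x = 0"
    then have "sgn (e * l i) = 0" using sgn_mu[OF i] by simp
    then show False using l0[OF i] e by (auto simp: sgn_0_0)
  qed
  have "0 < mu i x \<longleftrightarrow> 0 < e * l i" "mu i x < 0 \<longleftrightarrow> e * l i < 0" if "i < N" for i
    using sgn_mu[OF that] by (metis sgn_greater, metis sgn_less)
  then have pos: "{i. i < N \<and> 0 < mu i x} = {i. i < N \<and> 0 < e * l i}"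
    and neg: "{i. i < N \<and> mu i x < 0} = {i. i < N \<and> e * l i < 0}" by auto
  have "card {i. i < N \<and> 0 < e * l i} = (if e = 1 then Npos_mat (L p) else Nneg_mat (L p))"
    "card {i. i < N \<and> e * l i < 0} = (if e = 1 then Nneg_mat (L p) else Npos_mat (L p))"
    using e unfolding real_eigenvalue_listing_counts(1,2)[OF Lp l] by auto
  then show ?thesis using x nz pos neg by (intro exI[of _ x]) simp
qed

section \<open>Selfadjoint pencils of odd degree\<close>

locale odd_selfadjoint_pencil =
  fixes N p :: nat and L :: "nat \<Rightarrow> complex mat" and mu :: "nat \<Rightarrow> real \<Rightarrow> real"
  assumes odd_degree: "odd p"
    and hermitian_coeffs: "\<forall>j\<le>p. hermitian_mat N (L j)"
    and invertible_lead: "invertible_mat (L p)"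
    and branches: "eigen_branches N p L mu"
begin

lemma coeff_carrier: "j \<le> p \<Longrightarrow> L j \<in> carrier_mat N N"
  using hermitian_coeffs hermitian_mat_carrier by blast

lemma branch_analytic: "i < N \<Longrightarrow> real_analytic (mu i)"
  using branches unfolding eigen_branches_def by blast

lemma branch_listing: "real_eigenvalue_listing N (pencil N p L (complex_of_real x)) (\<lambda>i. mu i x)"
  using branches unfolding eigen_branches_def real_eigenvalue_listing_def by blast

lemma char_value_iff: "x \<in> real_char_values N p L \<longleftrightarrow> (\<exists>i<N. mu i x = 0)"
  unfolding real_char_values_def
  using real_eigenvalue_listing_counts(4)[OF pencil_carrier branch_listing] by simp

lemma far_point:
  assumes "e = 1 \<or> e = -1"
  obtains x where "B \<le> e * x" and "\<forall>i<N. mu i x \<noteq> 0"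
    and "card {i. i < N \<and> 0 < mu i x} = (if e = 1 then Npos_mat (L p) else Nneg_mat (L p))"
    and "card {i. i < N \<and> mu i x < 0} = (if e = 1 then Nneg_mat (L p) else Npos_mat (L p))"
  using far_point_sign_count[OF coeff_carrier[OF order_refl] invertible_lead branch_listing odd_degree assms]
  by blast

lemma finite_char_values: "finite (real_char_values N p L)"
proof -
  obtain q where q: "\<And>z. det (pencil N p L z) = poly q z" using det_pencil_poly by metis
  obtain x where "\<forall>i<N. mu i x \<noteq> 0" using far_point[of 1 0] by auto
  then have "q \<noteq> 0" using char_value_iff[of x] q unfolding real_char_values_def by auto
  then have "finite (complex_of_real -` {z. poly q z = 0})"
    by (intro finite_vimageI poly_roots_finite) (auto intro: injI)
  then show ?thesis unfolding real_char_values_def q by (simp add: vimage_def)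
qed

lemma branch_zero_isolated: "\<forall>\<^sub>F y in at x. mu i y \<noteq> 0" if "i < N"
proof -
  have "\<not> x islimpt real_char_values N p L" by (rule islimpt_finite[OF finite_char_values])
  then have "\<forall>\<^sub>F y in at x. y \<notin> real_char_values N p L" by (simp add: islimpt_iff_eventually)
  then show ?thesis by eventually_elim (use that char_value_iff in blast)
qed

lemma char_values_bounded:
  obtains B where "0 < B" and "\<And>x. x \<in> real_char_values N p L \<Longrightarrow> \<bar>x\<bar> < B"
proof -
  obtain a where "\<forall>x\<in>real_char_values N p L. norm x \<le> a"
    using finite_imp_bounded[OF finite_char_values] unfolding bounded_iff by blast
  then show ?thesis by (intro that[of "max a 0 + 1"]) force+
qed

lemma abs_kappa_le_kernel_dim: "\<bar>kappa N mu x\<bar> \<le> int (kernel_dim (pencil N p L (complex_of_real x)))"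
proof -
  have "\<bar>kappa N mu x\<bar> \<le> int (card {i. i < N \<and> mu i x = 0})"
    by (rule abs_kappa_le_card_zero_branches[OF branch_analytic branch_zero_isolated])
  also have "card {i. i < N \<and> mu i x = 0} = Polynomial.order 0 (char_poly (pencil N p L (complex_of_real x)))"
    using real_eigenvalue_listing_counts(3)[OF pencil_carrier branch_listing] by simp
  also have "\<dots> = kernel_dim (pencil N p L (complex_of_real x))"
    by (rule order_zero_char_poly_eq_kernel_dim[OF hermitian_pencil[OF hermitian_coeffs]])
  finally show ?thesis .
qed

lemma sum_kappa_between:
  assumes "a < b"
  shows "(\<Sum>x\<in>{x\<in>real_char_values N p L. a < x \<and> x < b}. kappa N mu x) =
         (\<Sum>i<N. pos_left (mu i) b) - (\<Sum>i<N. pos_right (mu i) a)"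
proof -
  let ?S = "{x\<in>real_char_values N p L. a < x \<and> x < b}"
  have "(\<Sum>x\<in>?S. kappa N mu x) = (\<Sum>i<N. \<Sum>x\<in>?S. pos_right (mu i) x - pos_left (mu i) x)"
    using kappa_eq_sum_sign_jumps[OF branch_analytic branch_zero_isolated] sum.swap by simp
  also have "\<dots> = (\<Sum>i<N. pos_left (mu i) b - pos_right (mu i) a)"
  proof (intro sum.cong refl sum_sign_jumps_telescope)
    fix i assume "i \<in> {..<N}"
    then show "continuous_on {a<..<b} (mu i)" "{y\<in>{a<..<b}. mu i y = 0} \<subseteq> ?S"
      using real_analytic_isCont[OF branch_analytic] char_value_iff
      by (auto intro: continuous_at_imp_continuous_on)
  qed (use assms finite_char_values in auto)
  finally show ?thesis by (simp add: sum_subtractf)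
qed

lemma sum_pos_at_regular_point:
  assumes "\<forall>i<N. mu i x \<noteq> 0"
  shows "(\<Sum>i<N. pos_left (mu i) x) = card {i. i < N \<and> 0 < mu i x}"
    and "(\<Sum>i<N. pos_right (mu i) x) = card {i. i < N \<and> 0 < mu i x}"
  using pos_right_pos_left_nonzero[OF real_analytic_isCont[OF branch_analytic]] assms
  by (simp_all add: Int_def)

lemma sum_pos_right_at_0: "(\<Sum>i<N. pos_right (mu i) 0) = int N - Nneg_mat (L 0) - Zdown_pos N mu"
proof -
  have "(\<Sum>i<N. pos_right (mu i) 0) = (\<Sum>i<N. 1 - of_bool (\<forall>\<^sub>F y in at_right 0. mu i y < 0))"
    using pos_right_pos_left_isolated(1)[OF branch_analytic branch_zero_isolated] by simp
  also have "\<dots> = int N - card {i. i < N \<and> (\<forall>\<^sub>F y in at_right 0. mu i y < 0)}"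
    by (simp add: sum_subtractf Int_def)
  also have "card {i. i < N \<and> (\<forall>\<^sub>F y in at_right 0. mu i y < 0)} =
      card {i. i < N \<and> mu i 0 < 0} + Zdown_pos N mu"
    unfolding Zdown_pos_def using real_analytic_isCont[OF branch_analytic]
    by (intro card_eventually_neg_split) (simp_all add: at_within_le_at)
  also have "card {i. i < N \<and> mu i 0 < 0} = Nneg_mat (L 0)"
    using real_eigenvalue_listing_counts(1)[OF pencil_carrier branch_listing, of 0]
      pencil_at_zero[OF coeff_carrier] by simp
  finally show ?thesis by simp
qed

lemma sum_pos_left_at_0: "(\<Sum>i<N. pos_left (mu i) 0) = int N - Nneg_mat (L 0) - Zdown_neg N mu"
proof -
  have "(\<Sum>i<N. pos_left (mu i) 0) = (\<Sum>i<N. 1 - of_bool (\<forall>\<^sub>F y in at_left 0. mu i y < 0))"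
    using pos_right_pos_left_isolated(2)[OF branch_analytic branch_zero_isolated] by simp
  also have "\<dots> = int N - card {i. i < N \<and> (\<forall>\<^sub>F y in at_left 0. mu i y < 0)}"
    by (simp add: sum_subtractf Int_def)
  also have "card {i. i < N \<and> (\<forall>\<^sub>F y in at_left 0. mu i y < 0)} =
      card {i. i < N \<and> mu i 0 < 0} + Zdown_neg N mu"
    unfolding Zdown_neg_def using real_analytic_isCont[OF branch_analytic]
    by (intro card_eventually_neg_split) (simp_all add: at_within_le_at)
  also have "card {i. i < N \<and> mu i 0 < 0} = Nneg_mat (L 0)"
    using real_eigenvalue_listing_counts(1)[OF pencil_carrier branch_listing, of 0]
      pencil_at_zero[OF coeff_carrier] by simp
  finally show ?thesis by simp
qed

lemma Npos_mat_plus_Nneg_mat_lead: "Npos_mat (L p) + Nneg_mat (L p) = N"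
proof -
  obtain x where nz: "\<forall>i<N. mu i x \<noteq> 0" and pos: "card {i. i < N \<and> 0 < mu i x} = Npos_mat (L p)"
    and neg: "card {i. i < N \<and> mu i x < 0} = Nneg_mat (L p)"
    using far_point[of 1 0] by auto
  have "card ({i. i < N \<and> 0 < mu i x} \<union> {i. i < N \<and> mu i x < 0}) =
      card {i. i < N \<and> 0 < mu i x} + card {i. i < N \<and> mu i x < 0}"
    by (rule card_Un_disjoint) auto
  moreover have "{i. i < N \<and> 0 < mu i x} \<union> {i. i < N \<and> mu i x < 0} = {..<N}"
    using nz by (auto simp: linorder_neq_iff)
  ultimately show ?thesis using pos neg by simp
qed

lemma sum_kappa_pos:
  "(\<Sum>x\<in>{x\<in>real_char_values N p L. 0 < x}. kappa N mu x) =
     int (Npos_mat (L p)) - N + Nneg_mat (L 0) + Zdown_pos N mu"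
proof -
  obtain B where B: "0 < B" "\<And>x. x \<in> real_char_values N p L \<Longrightarrow> \<bar>x\<bar> < B"
    using char_values_bounded by blast
  obtain b where b: "B \<le> b" "\<forall>i<N. mu i b \<noteq> 0" "card {i. i < N \<and> 0 < mu i b} = Npos_mat (L p)"
    using far_point[of 1 B] by auto
  have "{x\<in>real_char_values N p L. 0 < x} = {x\<in>real_char_values N p L. 0 < x \<and> x < b}"
    using B(2) b(1) by fastforce
  then have "(\<Sum>x\<in>{x\<in>real_char_values N p L. 0 < x}. kappa N mu x) =
      (\<Sum>i<N. pos_left (mu i) b) - (\<Sum>i<N. pos_right (mu i) 0)"
    using sum_kappa_between[of 0 b] B(1) b(1) by simp
  then show ?thesis using sum_pos_at_regular_point(1)[OF b(2)] b(3) sum_pos_right_at_0 by simp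
qed

lemma sum_kappa_neg:
  "(\<Sum>x\<in>{x\<in>real_char_values N p L. x < 0}. kappa N mu x) =
     int N - Nneg_mat (L 0) - Zdown_neg N mu - Nneg_mat (L p)"
proof -
  obtain B where B: "0 < B" "\<And>x. x \<in> real_char_values N p L \<Longrightarrow> \<bar>x\<bar> < B"
    using char_values_bounded by blast
  obtain a where a: "B \<le> - a" "\<forall>i<N. mu i a \<noteq> 0" "card {i. i < N \<and> 0 < mu i a} = Nneg_mat (L p)"
    using far_point[of "-1" B] by auto
  have "{x\<in>real_char_values N p L. x < 0} = {x\<in>real_char_values N p L. a < x \<and> x < 0}"
    using B(2) a(1) by fastforce
  then have "(\<Sum>x\<in>{x\<in>real_char_values N p L. x < 0}. kappa N mu x) =
      (\<Sum>i<N. pos_left (mu i) 0) - (\<Sum>i<N. pos_right (mu i) a)"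
    using sum_kappa_between[of a 0] B(1) a(1) by simp
  then show ?thesis using sum_pos_at_regular_point(2)[OF a(2)] a(3) sum_pos_left_at_0 by simp
qed

lemma abs_sum_kappa_le:
  "\<bar>\<Sum>x\<in>S. kappa N mu x\<bar> \<le> (\<Sum>x\<in>S. int (kernel_dim (pencil N p L (complex_of_real x))))"
  by (rule order_trans[OF sum_abs sum_mono]) (rule abs_kappa_le_kernel_dim)

end

theorem theorem6:
  fixes N l p :: nat and L :: "nat \<Rightarrow> complex mat" and mu :: "nat \<Rightarrow> real \<Rightarrow> real"
  assumes p_odd: "p = 2 * l + 1"
    and herm: "\<forall>j\<le>p. hermitian_mat N (L j)"
    and inv: "invertible_mat (L p)"
    and branches: "eigen_branches N p L mu"
  shows "int N - 2 * int (Nneg_mat (L 0)) - int (Zdown_pos N mu) - int (Zdown_neg N mu)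
           + (\<Sum>x\<in>{x\<in>real_char_values N p L. 0 < x}. kappa N mu x)
           - (\<Sum>x\<in>{x\<in>real_char_values N p L. x < 0}. kappa N mu x) = 0
         \<and> int (Npos_pencil N p L) \<ge>
           \<bar>int (Nneg_mat (L 0)) + int (Zdown_pos N mu) - int (Nneg_mat (L p))\<bar>
         \<and> int (Nneg_pencil N p L) \<ge>
           \<bar>int (Nneg_mat (L 0)) + int (Zdown_neg N mu) - int (Npos_mat (L p))\<bar>"
proof -
  interpret odd_selfadjoint_pencil N p L mu
    using p_odd herm inv branches by unfold_locales simp_all
  have lead: "int (Npos_mat (L p)) + int (Nneg_mat (L p)) = int N"
    using Npos_mat_plus_Nneg_mat_lead by linarith
  have "int (Npos_pencil N p L) \<ge> \<bar>\<Sum>x\<in>{x\<in>real_char_values N p L. 0 < x}. kappa N mu x\<bar>"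
    "int (Nneg_pencil N p L) \<ge> \<bar>\<Sum>x\<in>{x\<in>real_char_values N p L. x < 0}. kappa N mu x\<bar>"
    unfolding Npos_pencil_def Nneg_pencil_def of_nat_sum by (rule abs_sum_kappa_le)+
  then show ?thesis using sum_kappa_pos sum_kappa_neg lead unfolding abs_le_iff by linarith
qed

end
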